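(* Let $z,\alpha,\beta,\delta\in\mathbb{C}$ with $\mathrm{Re}(\delta)>-1$ and $\mathrm{Re}(\beta)>-1$, let $q>0$, let $x\in\mathbb{R}$ with $|x|<q$, and let $v\in\mathbb{C}$ with $|v|<1$. Then $$\int_0^1t^\beta(1-t)^\delta(1-tv)^{-\alpha}\bigl(\zeta_E(z,q-xt)-\zeta_E(z,q)\bigr)\,dt=\sum_{j=1}^\infty\frac{\Gamma(z+j)}{\Gamma(z)\,j!}\,B(\beta+j+1,\delta+1)\;{}_2F_1(\alpha,\beta+j+1;\delta+\beta+j+2;v)\;\zeta_E(z+j,q)\,x^j,$$ where $\frac{\Gamma(z+j)}{\Gamma(z)}=z(z+1)\cdots(z+j-1)$.
   Context: For $q>0$, $\zeta_E(z,q)=\sum_{n=0}^\infty (-1)^n (n+q)^{-z}$ for $\mathrm{Re}(z)>0$, extended by analytic continuation to an entire function of $z$. $B(a,b)=\frac{\Gamma(a)\Gamma(b)}{\Gamma(a+b)}$ is the beta function and ${}_2F_1(a,b;c;v)=\sum_{n\ge0}\frac{(a)_n(b)_n}{(c)_n n!}v^n$ is the Gauss hypergeometric function, where $(a)_n=a(a+1)\cdots(a+n-1)$; $(1-tv)^{-\alpha}$ uses the principal branch. *)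

theory Defs
  imports "HOL-Analysis.Analysis"
begin

definition zeta_E :: "complex \<Rightarrow> real \<Rightarrow> complex" where
  "zeta_E z q =
     (THE f. f holomorphic_on UNIV \<and>
        (\<forall>w. 0 < Re w \<longrightarrow>
           (\<lambda>n. (-1) ^ n * complex_of_real (real n + q) powr (- w)) sums f w)) z"

definition hyp2F1 :: "complex \<Rightarrow> complex \<Rightarrow> complex \<Rightarrow> complex \<Rightarrow> complex" where
  "hyp2F1 a b c v =
     (\<Sum>n. pochhammer a n * pochhammer b n / (pochhammer c n * fact n) * v ^ n)"

end

theory Submission
  imports Defs "HOL-Complex_Analysis.Complex_Analysis"
begin

text \<open>
  Expand \<open>zeta_E(z, q - x t) = \<Sum>\<^sub>j (z)_j / j! zeta_E(z + j, q) (x t)^j\<close> and integrate termwise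
  against \<open>t^\<beta> (1 - t)^\<delta> (1 - t v)^(-\<alpha>)\<close>: by Euler's integral for \<open>2F1\<close>, the \<open>j\<close>-th moment of
  this kernel is \<open>B(\<beta> + j + 1, \<delta> + 1) 2F1(\<alpha>, \<beta> + j + 1; \<delta> + \<beta> + j + 2; v)\<close>, and the term
  \<open>j = 0\<close> is the subtracted \<open>zeta_E(z, q)\<close>. Dominated convergence justifies the interchange.

  For \<open>Re z > 1\<close> the Taylor expansion follows by expanding every term \<open>(n + q - u)^(-z)\<close>
  binomially and summing the absolutely convergent double series by columns. Both sides are
  entire in \<open>z\<close>: \<open>N\<close> steps of Euler's transformation of the alternating series, which involve
  the forward differences of \<open>y^(-z)\<close>, continue \<open>zeta_E\<close> to \<open>Re z > 1 - N\<close>. Euler's integral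
  follows by integrating the binomial series of \<open>(1 - t v)^(-\<alpha>)\<close> against the Beta kernel, whose
  integral is obtained for complex parameters from the real case by analytic continuation in
  each parameter.
\<close>

section \<open>Analytic continuation of \<open>zeta_E\<close>\<close>

fun powr_fdiff :: "nat \<Rightarrow> complex \<Rightarrow> real \<Rightarrow> complex" where
  "powr_fdiff 0 z y = complex_of_real y powr (-z)"
| "powr_fdiff (Suc k) z y = powr_fdiff k z (y + 1) - powr_fdiff k z y"

lemma norm_diff_le_vector_derivative_bound:
  fixes f :: "real \<Rightarrow> 'a::real_normed_vector"
  assumes "a \<le> b" "\<And>x. x \<in> {a..b} \<Longrightarrow> (f has_vector_derivative f' x) (at x)"
    "\<And>x. x \<in> {a..b} \<Longrightarrow> norm (f' x) \<le> B"
  shows "norm (f b - f a) \<le> B * (b - a)"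
proof -
  have "norm (f b - f a) \<le> B * norm (b - a)"
  proof (rule differentiable_bound[where S="{a..b}" and f'="\<lambda>x h. h *\<^sub>R f' x"])
    show "(f has_derivative (\<lambda>h. h *\<^sub>R f' x)) (at x within {a..b})" if "x \<in> {a..b}" for x
      using assms(2)[OF that] unfolding has_vector_derivative_def
      by (rule has_derivative_at_withinI)
    show "onorm (\<lambda>h. h *\<^sub>R f' x) \<le> B" if "x \<in> {a..b}" for x
      using onorm_scaleR_left_lemma[OF bounded_linear_ident, of "f' x"] assms(3)[OF that]
      by (simp add: onorm_id)
  qed (use assms in auto)
  thus ?thesis using assms(1) by simp
qed

lemma powr_fdiff_has_vector_derivative:
  assumes "y > 0"
  shows "(powr_fdiff k z has_vector_derivative (- z * powr_fdiff k (z + 1) y)) (at y)"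
  using assms
proof (induction k arbitrary: y)
  case 0
  have "((\<lambda>w. w powr (-z)) has_field_derivative (-z * complex_of_real y powr (-z - 1)))
          (at (complex_of_real y))"
    by (rule has_field_derivative_powr) (use 0 in \<open>auto simp: complex_nonpos_Reals_iff\<close>)
  hence "((\<lambda>x. complex_of_real x powr (-z)) has_vector_derivative
           (-z * complex_of_real y powr (-z - 1))) (at y)"
    by (rule has_vector_derivative_real_field)
  thus ?case by (simp add: diff_add_eq_diff_diff_swap)
next
  case (Suc k)
  have "((\<lambda>y. powr_fdiff k z (y + 1)) has_vector_derivative (- z * powr_fdiff k (z + 1) (y + 1))) (at y)"
  proof -
    have "((\<lambda>y. y + 1) has_vector_derivative 1) (at y)"
      by (auto intro!: derivative_eq_intros)
    from vector_diff_chain_at[OF this Suc.IH[of "y + 1"]] Suc.prems show ?thesis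
      by (simp add: o_def)
  qed
  from has_vector_derivative_diff[OF this Suc.IH[OF Suc.prems]] show ?case
    by (simp add: algebra_simps)
qed

lemma norm_powr_fdiff_le:
  assumes "y > 0" "Re z + real k \<ge> 0"
  shows "norm (powr_fdiff k z y) \<le> (\<Prod>i<k. norm (z + of_nat i)) * y powr (-(Re z + real k))"
  using assms
proof (induction k arbitrary: z y)
  case 0
  thus ?case by (simp add: norm_powr_real_powr)
next
  case (Suc k)
  define B where "B = norm z * (\<Prod>i<k. norm (z + 1 + of_nat i)) * y powr (-(Re z + 1 + real k))"
  have "norm (powr_fdiff k z (y + 1) - powr_fdiff k z y) \<le> B * ((y + 1) - y)"
  proof (rule norm_diff_le_vector_derivative_bound)
    show "(powr_fdiff k z has_vector_derivative - z * powr_fdiff k (z + 1) x) (at x)"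
      if "x \<in> {y..y+1}" for x
      using powr_fdiff_has_vector_derivative[of x k z] that Suc.prems by auto
    show "norm (- z * powr_fdiff k (z + 1) x) \<le> B" if "x \<in> {y..y+1}" for x
    proof -
      have x: "x > 0" "x \<ge> y" using that Suc.prems by auto
      have "norm (powr_fdiff k (z + 1) x)
              \<le> (\<Prod>i<k. norm (z + 1 + of_nat i)) * x powr (-(Re (z + 1) + real k))"
        by (rule Suc.IH) (use x Suc.prems in auto)
      also have "\<dots> \<le> (\<Prod>i<k. norm (z + 1 + of_nat i)) * y powr (-(Re z + 1 + real k))"
        using powr_mono2'[of "-(Re z + 1 + real k)" y x] x Suc.prems
        by (intro mult_left_mono prod_nonneg) auto
      finally show ?thesis unfolding B_def norm_mult norm_minus_cancel
        by (simp add: mult.assoc mult_left_mono)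
    qed
  qed simp
  also have "B * ((y + 1) - y) = (\<Prod>i<Suc k. norm (z + of_nat i)) * y powr (-(Re z + real (Suc k)))"
    unfolding B_def prod.lessThan_Suc_shift by (simp add: algebra_simps)
  finally show ?case by simp
qed

lemma summable_shifted_powr:
  assumes "q > 0" "c > 1"
  shows "summable (\<lambda>n. (real n + q) powr (-c))"
proof (rule summable_comparison_test_ev)
  show "summable (\<lambda>n. real n powr (-c))"
    by (subst summable_real_powr_iff) (use assms in auto)
  show "eventually (\<lambda>n. norm ((real n + q) powr (-c)) \<le> real n powr (-c)) sequentially"
    using eventually_gt_at_top[of "0::nat"]
    by eventually_elim (use assms in \<open>auto intro!: powr_mono2'\<close>)
qed

lemma powr_fdiff_shifted_tendsto_0:
  assumes "q > 0" "Re z + real k > 0"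
  shows "(\<lambda>n. powr_fdiff k z (real n + q)) \<longlonglongrightarrow> 0"
proof (rule Lim_null_comparison)
  define P where "P = (\<Prod>i<k. norm (z + of_nat i))"
  show "eventually (\<lambda>n. norm (powr_fdiff k z (real n + q)) \<le> P * (real n + q) powr (-(Re z + real k)))
          sequentially"
    unfolding P_def using assms by (intro always_eventually allI norm_powr_fdiff_le) auto
  have "filterlim (\<lambda>n. real n + q) at_top sequentially"
    using filterlim_tendsto_add_at_top[OF tendsto_const[of q] filterlim_real_sequentially]
    by (simp add: add.commute)
  hence "(\<lambda>n. (real n + q) powr (-(Re z + real k))) \<longlonglongrightarrow> 0"
    by (rule tendsto_neg_powr[rotated]) (use assms in auto)
  thus "(\<lambda>n. P * (real n + q) powr (-(Re z + real k))) \<longlonglongrightarrow> 0"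
    using tendsto_mult_right_zero by blast
qed

lemma summable_norm_powr_fdiff_shifted:
  assumes "q > 0" "Re z + real k > 1"
  shows "summable (\<lambda>n. norm (powr_fdiff k z (real n + q)))"
proof (rule summable_comparison_test)
  show "\<exists>N. \<forall>n\<ge>N. norm (norm (powr_fdiff k z (real n + q)))
          \<le> (\<Prod>i<k. norm (z + of_nat i)) * (real n + q) powr (-(Re z + real k))"
    using norm_powr_fdiff_le[of "real _ + q" z k] assms by auto
  show "summable (\<lambda>n. (\<Prod>i<k. norm (z + of_nat i)) * (real n + q) powr (-(Re z + real k)))"
    by (intro summable_mult summable_shifted_powr) (use assms in auto)
qed

lemma summable_alternating_powr_fdiff:
  assumes "q > 0" "Re z + real k > 1"
  shows "summable (\<lambda>n. (-1)^n * powr_fdiff k z (real n + q))"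
  by (rule summable_norm_cancel)
     (use summable_norm_powr_fdiff_shifted[OF assms] in \<open>simp add: norm_mult norm_power\<close>)

lemma sums_alternating_forward_diff:
  fixes f :: "nat \<Rightarrow> complex"
  assumes "f \<longlonglongrightarrow> 0" and "(\<lambda>n. (-1)^n * (f (Suc n) - f n)) sums s"
  shows "(\<lambda>n. (-1)^n * f n) sums ((f 0 - s) / 2)"
proof -
  have partial: "(\<Sum>n<M. (-1)^n * f n)
      = (f 0 - (-1)^M * f M - (\<Sum>n<M. (-1)^n * (f (Suc n) - f n))) / 2" for M
    by (induction M) (auto simp: algebra_simps)
  have "(\<lambda>M. (-1)^M * f M) \<longlonglongrightarrow> 0"
    by (rule tendsto_norm_zero_cancel)
       (use tendsto_norm_zero[OF assms(1)] in \<open>simp add: norm_mult norm_power\<close>)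
  hence "(\<lambda>M. (f 0 - (-1)^M * f M - (\<Sum>n<M. (-1)^n * (f (Suc n) - f n))) / 2)
           \<longlonglongrightarrow> (f 0 - 0 - s) / 2"
    using assms(2) unfolding sums_def by (intro tendsto_intros) auto
  thus ?thesis unfolding sums_def partial by simp
qed

text \<open>The series for \<open>zeta_E z q\<close> after \<open>N\<close> steps of Euler's transformation; the remaining
  series converges for \<open>Re z > 1 - N\<close>.\<close>
definition euler_zeta_E :: "real \<Rightarrow> nat \<Rightarrow> complex \<Rightarrow> complex" where
  "euler_zeta_E q N z =
     (\<Sum>k<N. (-1)^k * powr_fdiff k z q / 2^(k+1))
     + (-1)^N / 2^N * (\<Sum>n. (-1)^n * powr_fdiff N z (real n + q))"

lemma sums_alternating_powr_fdiff:
  assumes "q > 0" "Re z + real N > 0"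
  shows "(\<lambda>n. (-1)^n * powr_fdiff N z (real n + q))
           sums ((powr_fdiff N z q - (\<Sum>n. (-1)^n * powr_fdiff (Suc N) z (real n + q))) / 2)"
proof -
  have "(\<lambda>n. (-1)^n * powr_fdiff (Suc N) z (real n + q))
          sums (\<Sum>n. (-1)^n * powr_fdiff (Suc N) z (real n + q))"
    using assms by (intro summable_sums summable_alternating_powr_fdiff) auto
  hence "(\<lambda>n. (-1)^n * (powr_fdiff N z (real (Suc n) + q) - powr_fdiff N z (real n + q)))
           sums (\<Sum>n. (-1)^n * powr_fdiff (Suc N) z (real n + q))"
    by (simp add: algebra_simps)
  from sums_alternating_forward_diff[OF powr_fdiff_shifted_tendsto_0[OF assms] this]
  show ?thesis by simp
qed

lemma euler_zeta_E_Suc: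
  assumes "q > 0" "Re z + real N > 0"
  shows "euler_zeta_E q (Suc N) z = euler_zeta_E q N z"
proof -
  define s where "s = (\<Sum>n. (-1)^n * powr_fdiff (Suc N) z (real n + q))"
  have "(\<Sum>n. (-1)^n * powr_fdiff N z (real n + q)) = (powr_fdiff N z q - s) / 2"
    using sums_alternating_powr_fdiff[OF assms] by (simp add: s_def sums_iff)
  thus ?thesis unfolding euler_zeta_E_def sum.lessThan_Suc s_def[symmetric]
    by (simp only:) (simp add: field_simps)
qed

lemma euler_zeta_E_eq:
  assumes "q > 0" "Re z + real N > 0" "N \<le> M"
  shows "euler_zeta_E q M z = euler_zeta_E q N z"
  using assms(3)
proof (induction M rule: dec_induct)
  case (step m)
  thus ?case using euler_zeta_E_Suc[of q z m] assms by simp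
qed simp

lemma holomorphic_powr_fdiff: "(\<lambda>z. powr_fdiff k z y) holomorphic_on A"
  by (induction k arbitrary: y) (auto intro!: holomorphic_intros)

lemma mem_cball_Re_norm_bounds:
  fixes x z :: complex
  assumes "z \<in> cball x d"
  shows "Re x - d \<le> Re z" "Re z \<le> Re x + d" "norm z \<le> norm x + d"
proof -
  have "norm (x - z) \<le> d" using assms by (simp add: dist_norm)
  thus "Re x - d \<le> Re z" "Re z \<le> Re x + d"
    using complex_Re_le_cmod[of "x - z"] complex_Re_le_cmod[of "z - x"]
    by (auto simp: norm_minus_commute)
  show "norm z \<le> norm x + d"
    using norm_triangle_ineq4[of x "x - z"] \<open>norm (x - z) \<le> d\<close> by (simp add: norm_minus_commute)
qed

lemma norm_powr_fdiff_le_on_cball: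
  assumes "z \<in> cball x d" "y \<ge> 1" "Re x + real N - d \<ge> 0"
  shows "norm (powr_fdiff N z y) \<le> (\<Prod>i<N. norm x + d + real i) * y powr (-(Re x + real N - d))"
proof -
  note z = mem_cball_Re_norm_bounds[OF assms(1)]
  have "d \<ge> 0" using assms(1) zero_le_dist[of x z] unfolding mem_cball by linarith
  have "norm (powr_fdiff N z y) \<le> (\<Prod>i<N. norm (z + of_nat i)) * y powr (-(Re z + real N))"
    by (rule norm_powr_fdiff_le) (use assms z in auto)
  also have "\<dots> \<le> (\<Prod>i<N. norm x + d + real i) * y powr (-(Re x + real N - d))"
  proof (intro mult_mono prod_mono conjI)
    fix i assume "i \<in> {..<N}"
    show "norm (z + of_nat i) \<le> norm x + d + real i"
      using norm_triangle_ineq[of z "of_nat i"] z(3) by simp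
  qed (use assms z \<open>d \<ge> 0\<close> in \<open>auto intro!: prod_nonneg powr_mono\<close>)
  finally show ?thesis .
qed

lemma holomorphic_alternating_powr_fdiff_series:
  assumes "q > 0"
  shows "(\<lambda>z. \<Sum>n. (-1)^n * powr_fdiff N z (real n + q)) holomorphic_on {z. Re z > 1 - real N}"
proof (rule holomorphic_uniform_sequence[OF open_halfspace_Re_gt])
  show "(\<lambda>z. \<Sum>i<n. (-1)^i * powr_fdiff N z (real i + q)) holomorphic_on {z. Re z > 1 - real N}" for n
    by (intro holomorphic_intros holomorphic_powr_fdiff)
  fix x assume "x \<in> {z. Re z > 1 - real N}"
  define d where "d = (Re x + real N - 1) / 2"
  have d: "d > 0" "Re x + real N - d > 1" using \<open>x \<in> _\<close> by (auto simp: d_def field_simps)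
  define M where "M = (\<lambda>n. (\<Prod>i<N. norm x + d + real i) * (real n + q) powr (-(Re x + real N - d)))"
  have "cball x d \<subseteq> {z. Re z > 1 - real N}"
  proof
    fix z assume "z \<in> cball x d"
    thus "z \<in> {z. Re z > 1 - real N}" using mem_cball_Re_norm_bounds(1)[of z x d] d by simp
  qed
  moreover have "uniform_limit (cball x d) (\<lambda>n z. \<Sum>i<n. (-1)^i * powr_fdiff N z (real i + q))
           (\<lambda>z. \<Sum>i. (-1)^i * powr_fdiff N z (real i + q)) sequentially"
  proof (rule Weierstrass_m_test_ev)
    show "summable M"
      unfolding M_def by (intro summable_mult summable_shifted_powr) (use assms d in auto)
    show "eventually (\<lambda>n. \<forall>z\<in>cball x d. norm ((-1)^n * powr_fdiff N z (real n + q)) \<le> M n)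
            sequentially"
      using eventually_ge_at_top[of "1::nat"]
    proof eventually_elim
      case (elim n)
      show ?case
      proof
        fix z assume "z \<in> cball x d"
        from norm_powr_fdiff_le_on_cball[OF this, of "real n + q" N] elim assms d
        show "norm ((-1)^n * powr_fdiff N z (real n + q)) \<le> M n"
          by (simp add: M_def norm_mult norm_power)
      qed
    qed
  qed
  ultimately show "\<exists>d>0. cball x d \<subseteq> {z. Re z > 1 - real N} \<and>
      uniform_limit (cball x d) (\<lambda>n z. \<Sum>i<n. (-1)^i * powr_fdiff N z (real i + q))
        (\<lambda>z. \<Sum>i. (-1)^i * powr_fdiff N z (real i + q)) sequentially"
    using d by blast
qed

lemma holomorphic_on_UNIV_if_right_half_planes:
  assumes "\<And>N::nat. f holomorphic_on {z. Re z > 1 - real N}"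
  shows "f holomorphic_on UNIV"
proof -
  have "f field_differentiable (at z)" for z
  proof (rule holomorphic_on_imp_differentiable_at[OF assms open_halfspace_Re_gt])
    show "z \<in> {w. Re w > 1 - real (nat \<lceil>2 - Re z\<rceil>)}" by simp linarith
  qed
  thus ?thesis by (simp add: holomorphic_on_def)
qed

lemma holomorphic_euler_zeta_E:
  assumes "q > 0"
  shows "euler_zeta_E q N holomorphic_on {z. Re z > 1 - real N}"
  unfolding euler_zeta_E_def[abs_def]
  by (intro holomorphic_intros holomorphic_powr_fdiff holomorphic_alternating_powr_fdiff_series assms) auto

lemma sums_euler_zeta_E_1:
  assumes "q > 0" "Re w > 0"
  shows "(\<lambda>n. (-1)^n * complex_of_real (real n + q) powr (-w)) sums euler_zeta_E q 1 w"
  using sums_alternating_powr_fdiff[of q w 0] assms by (simp add: euler_zeta_E_def diff_divide_distrib)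

lemma zeta_E_eqI:
  assumes "G holomorphic_on UNIV"
    and "\<And>w. Re w > 0 \<Longrightarrow> (\<lambda>n. (-1)^n * complex_of_real (real n + q) powr (-w)) sums G w"
  shows "zeta_E z q = G z"
proof -
  let ?P = "\<lambda>f. f holomorphic_on UNIV \<and>
        (\<forall>w. 0 < Re w \<longrightarrow> (\<lambda>n. (-1) ^ n * complex_of_real (real n + q) powr (- w)) sums f w)"
  have "(THE f. ?P f) = G"
  proof (rule the_equality)
    show "?P G" using assms by auto
    fix f assume f: "?P f"
    show "f = G"
    proof
      fix w
      have "f w - G w = 0"
      proof (rule analytic_continuation[of "\<lambda>z. f z - G z" UNIV "{z. Re z > 0}" 1])
        show "(\<lambda>z. f z - G z) holomorphic_on UNIV"
          using f assms(1) by (intro holomorphic_intros) auto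
        show "1 islimpt {z. Re z > 0}"
          by (rule open_imp_islimpt) (auto intro: open_halfspace_Re_gt)
        show "f z - G z = 0" if "z \<in> {z. Re z > 0}" for z
          using f assms(2)[of z] that sums_unique2 by auto
      qed auto
      thus "f w = G w" by simp
    qed
  qed
  thus ?thesis unfolding zeta_E_def by simp
qed

text \<open>The Euler transforms of all orders agree wherever they converge, so together they form an
  entire function with the defining property of \<open>zeta_E\<close>.\<close>
lemma zeta_E_eq_euler_zeta_E:
  assumes "q > 0" "Re z + real N > 0"
  shows "zeta_E z q = euler_zeta_E q N z"
proof -
  define G where "G = (\<lambda>z. euler_zeta_E q (nat \<lceil>1 - Re z\<rceil>) z)"
  have G_eq: "G z = euler_zeta_E q N z" if "Re z + real N > 0" for z N
  proof -
    define N0 where "N0 = nat \<lceil>1 - Re z\<rceil>"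
    have "Re z + real N0 > 0" unfolding N0_def by linarith
    hence "euler_zeta_E q N0 z = euler_zeta_E q (max N N0) z"
      using euler_zeta_E_eq[of q z N0 "max N N0"] assms(1) by simp
    also have "\<dots> = euler_zeta_E q N z"
      using euler_zeta_E_eq[of q z N "max N N0"] assms(1) that by simp
    finally show ?thesis by (simp add: G_def N0_def)
  qed
  have "G holomorphic_on {z. Re z > 1 - real N}" for N
    using holomorphic_euler_zeta_E[OF assms(1), of N]
    by (rule holomorphic_transform) (auto intro!: G_eq[symmetric])
  hence "zeta_E z q = G z"
  proof (intro zeta_E_eqI holomorphic_on_UNIV_if_right_half_planes)
    fix w :: complex assume "Re w > 0"
    thus "(\<lambda>n. (-1)^n * complex_of_real (real n + q) powr (-w)) sums G w"
      using sums_euler_zeta_E_1[OF assms(1)] G_eq[of w 1] by simp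
  qed
  thus ?thesis using G_eq[OF assms(2)] by simp
qed

lemma holomorphic_zeta_E:
  assumes "q > 0" "f holomorphic_on A"
  shows "(\<lambda>z. zeta_E (f z) q) holomorphic_on A"
proof -
  have "(\<lambda>z. zeta_E z q) holomorphic_on {z. Re z > 1 - real N}" for N
    using holomorphic_euler_zeta_E[OF assms(1), of N] 
    by (rule holomorphic_transform) (auto intro!: zeta_E_eq_euler_zeta_E[OF assms(1), symmetric])
  hence "(\<lambda>z. zeta_E z q) holomorphic_on UNIV"
    by (rule holomorphic_on_UNIV_if_right_half_planes)
  from holomorphic_on_compose[OF assms(2) holomorphic_on_subset[OF this]] show ?thesis
    by (simp add: o_def)
qed

lemma zeta_E_sums:
  assumes "q > 0" "Re w > 0"
  shows "(\<lambda>n. (-1)^n * complex_of_real (real n + q) powr (-w)) sums zeta_E w q"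
  using sums_euler_zeta_E_1[OF assms] zeta_E_eq_euler_zeta_E[of q w 1] assms by simp

section \<open>Taylor expansion of \<open>zeta_E\<close> in the second argument\<close>

lemma norm_pochhammer_le: "norm (pochhammer (z::complex) j) \<le> pochhammer (norm z) j"
  unfolding pochhammer_prod prod_norm[symmetric]
  using norm_triangle_ineq[of z "of_nat _"] by (intro prod_mono) auto

lemma pochhammer_nonneg_real: "(r::real) \<ge> 0 \<Longrightarrow> pochhammer r j \<ge> 0"
  unfolding pochhammer_prod by (intro prod_nonneg) auto

lemma pochhammer_mono_real: "0 \<le> (r::real) \<Longrightarrow> r \<le> s \<Longrightarrow> pochhammer r j \<le> pochhammer s j"
  unfolding pochhammer_prod by (intro prod_mono) auto

lemma norm_pochhammer_power_le:
  fixes a u :: complex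
  assumes "norm u \<le> r"
  shows "norm (pochhammer a j / fact j * u ^ j) \<le> pochhammer (norm a) j / fact j * r ^ j"
  unfolding norm_mult norm_divide norm_power norm_fact
  using assms by (intro mult_mono divide_right_mono norm_pochhammer_le power_mono)
                 (auto intro!: divide_nonneg_nonneg pochhammer_nonneg_real)

lemma gchoose_uminus_mult_power:
  "((- a :: 'a::field_char_0) gchoose j) * u ^ j = pochhammer a j / fact j * (- u) ^ j"
  by (simp add: gbinomial_pochhammer power_mult_distrib[symmetric])

lemma sums_pochhammer_power_real:
  fixes a r :: real
  assumes "\<bar>r\<bar> < 1"
  shows "(\<lambda>j. pochhammer a j / fact j * r ^ j) sums ((1 - r) powr (-a))"
  using gen_binomial_real[of "-r" "-a"] assms by (simp add: gchoose_uminus_mult_power)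

lemma sums_pochhammer_power_complex:
  fixes a u :: complex
  assumes "norm u < 1"
  shows "(\<lambda>j. pochhammer a j / fact j * u ^ j) sums ((1 - u) powr (-a))"
  using gen_binomial_complex[of "-u" "-a"] assms by (simp add: gchoose_uminus_mult_power)

lemma norm_zeta_E_le:
  assumes "q > 0" "Re w \<ge> 2"
  shows "norm (zeta_E w q) \<le> q powr (-Re w) * (q powr 2 * (\<Sum>n. (real n + q) powr (-2)))"
proof -
  have sum2: "summable (\<lambda>n. (real n + q) powr (-2))"
    by (rule summable_shifted_powr) (use assms in auto)
  have sumw: "summable (\<lambda>n. (real n + q) powr (-Re w))"
    by (rule summable_shifted_powr) (use assms in auto)
  have norm_term: "norm ((-1)^n * complex_of_real (real n + q) powr (-w)) = (real n + q) powr (-Re w)"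
    for n using assms by (simp add: norm_mult norm_power norm_powr_real_powr)
  have term_le: "(real n + q) powr (-Re w) \<le> q powr (-Re w) * (q powr 2 * (real n + q) powr (-2))"
    for n
  proof -
    have "(real n + q) powr (-Re w) = q powr (-Re w) * ((real n + q) / q) powr (-Re w)"
      using assms by (simp add: powr_divide field_simps powr_minus)
    also have "((real n + q) / q) powr (-Re w) \<le> ((real n + q) / q) powr (-2)"
      by (rule powr_mono) (use assms in auto)
    also have "((real n + q) / q) powr (-2) = q powr 2 * (real n + q) powr (-2)"
      using assms by (simp add: powr_divide powr_minus field_simps)
    finally show ?thesis using assms by (simp add: mult_left_mono)
  qed
  have "norm (zeta_E w q) = norm (\<Sum>n. (-1)^n * complex_of_real (real n + q) powr (-w))"
    using zeta_E_sums[of q w] assms by (simp add: sums_iff)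
  also have "\<dots> \<le> (\<Sum>n. (real n + q) powr (-Re w))"
    using summable_norm[of "\<lambda>n. (-1)^n * complex_of_real (real n + q) powr (-w)"] sumw
    by (simp only: norm_term)
  also have "\<dots> \<le> (\<Sum>n. q powr (-Re w) * (q powr 2 * (real n + q) powr (-2)))"
    by (intro suminf_le term_le sumw summable_mult sum2)
  also have "\<dots> = q powr (-Re w) * (q powr 2 * (\<Sum>n. (real n + q) powr (-2)))"
    using sum2 by (simp add: suminf_mult)
  finally show ?thesis .
qed

definition zeta_E_taylor_coeff :: "complex \<Rightarrow> real \<Rightarrow> nat \<Rightarrow> complex" where
  "zeta_E_taylor_coeff z q j = pochhammer z j / fact j * zeta_E (z + of_nat j) q"

lemma powr_le_add_powr:
  fixes q a e b :: real
  assumes "q > 0" "a \<le> e" "e \<le> b"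
  shows "q powr e \<le> q powr a + q powr b"
proof (cases "q \<ge> 1")
  case True
  thus ?thesis using powr_mono[OF assms(3) True] by (smt (verit) powr_ge_zero)
next
  case False
  thus ?thesis using powr_mono'[of a e q] assms by (smt (verit) powr_ge_zero)
qed

lemma norm_zeta_E_taylor_coeff_le:
  assumes "q > 0"
  obtains C where "\<forall>\<^sub>F j in sequentially. \<forall>z\<in>cball z0 1.
    norm (zeta_E_taylor_coeff z q j) \<le> C * (pochhammer (norm z0 + 1) j / fact j) / q ^ j"
proof
  define K where "K = q powr 2 * (\<Sum>n. (real n + q) powr (-2))"
  define Q where "Q = q powr (-(Re z0 + 1)) + q powr (-(Re z0 - 1))"
  have K: "K \<ge> 0" unfolding K_def
    by (intro mult_nonneg_nonneg suminf_nonneg summable_shifted_powr) (use assms in auto)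
  show "\<forall>\<^sub>F j in sequentially. \<forall>z\<in>cball z0 1.
    norm (zeta_E_taylor_coeff z q j) \<le> Q * K * (pochhammer (norm z0 + 1) j / fact j) / q ^ j"
    using eventually_ge_at_top[of "nat \<lceil>3 - Re z0\<rceil>"]
  proof eventually_elim
    case (elim j)
    show ?case
    proof
      fix z assume "z \<in> cball z0 1"
      note Re_z = mem_cball_Re_norm_bounds(1,2)[OF this]
      have "norm z \<le> norm z0 + 1" by (rule mem_cball_Re_norm_bounds(3)[OF \<open>z \<in> _\<close>])
      hence poch: "norm (pochhammer z j) \<le> pochhammer (norm z0 + 1) j"
        using norm_pochhammer_le[of z j] pochhammer_mono_real[OF norm_ge_zero] by (meson order_trans)
      have "real j \<ge> 3 - Re z0" using elim by linarith
      hence "Re (z + of_nat j) \<ge> 2" using Re_z by simp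
      hence "norm (zeta_E (z + of_nat j) q) \<le> q powr (-Re (z + of_nat j)) * K"
        unfolding K_def by (rule norm_zeta_E_le[OF assms])
      also have "q powr (-Re (z + of_nat j)) = q powr (-Re z) / q ^ j"
        using assms by (simp add: powr_diff powr_realpow[symmetric] powr_minus field_simps)
      also have "q powr (-Re z) / q ^ j * K \<le> Q / q ^ j * K"
        using powr_le_add_powr[OF assms, of "-(Re z0 + 1)" "-Re z" "-(Re z0 - 1)"] Re_z K assms
        by (intro mult_right_mono divide_right_mono) (auto simp: Q_def)
      finally have "norm (zeta_E (z + of_nat j) q) \<le> Q / q ^ j * K" .
      with poch have "norm (pochhammer z j) * norm (zeta_E (z + of_nat j) q) / fact j
          \<le> pochhammer (norm z0 + 1) j * (Q / q ^ j * K) / fact j"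
        by (intro divide_right_mono mult_mono) (auto intro: pochhammer_nonneg_real)
      thus "norm (zeta_E_taylor_coeff z q j) \<le> Q * K * (pochhammer (norm z0 + 1) j / fact j) / q ^ j"
        by (simp add: zeta_E_taylor_coeff_def norm_mult norm_divide mult_ac)
    qed
  qed
qed

lemma zeta_E_taylor_series_bound:
  assumes "q > 0" "\<bar>u\<bar> < q"
  obtains M where "summable M"
    "\<forall>\<^sub>F j in sequentially. \<forall>z\<in>cball z0 1.
       norm (zeta_E_taylor_coeff z q j * of_real u ^ j) \<le> M j"
proof -
  obtain C where C: "\<forall>\<^sub>F j in sequentially. \<forall>z\<in>cball z0 1.
      norm (zeta_E_taylor_coeff z q j) \<le> C * (pochhammer (norm z0 + 1) j / fact j) / q ^ j"
    using norm_zeta_E_taylor_coeff_le[OF assms(1)] by blast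
  define r where "r = \<bar>u\<bar> / q"
  have "\<bar>r\<bar> < 1" using assms by (simp add: r_def)
  hence "summable (\<lambda>j. C * (pochhammer (norm z0 + 1) j / fact j * r ^ j))"
    by (intro summable_mult sums_summable[OF sums_pochhammer_power_real])
  moreover have "\<forall>\<^sub>F j in sequentially. \<forall>z\<in>cball z0 1.
      norm (zeta_E_taylor_coeff z q j * of_real u ^ j) \<le> C * (pochhammer (norm z0 + 1) j / fact j * r ^ j)"
    using C
  proof eventually_elim
    case (elim j)
    show ?case
    proof
      fix z assume "z \<in> cball z0 1"
      hence "norm (zeta_E_taylor_coeff z q j) * \<bar>u\<bar> ^ j
               \<le> C * (pochhammer (norm z0 + 1) j / fact j) / q ^ j * \<bar>u\<bar> ^ j"
        using elim by (intro mult_right_mono) auto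
      thus "norm (zeta_E_taylor_coeff z q j * of_real u ^ j)
              \<le> C * (pochhammer (norm z0 + 1) j / fact j * r ^ j)"
        by (simp add: norm_mult norm_power r_def power_divide)
    qed
  qed
  ultimately show ?thesis using that by blast
qed

lemma summable_norm_zeta_E_taylor:
  assumes "q > 0" "\<bar>u\<bar> < q"
  shows "summable (\<lambda>j. norm (zeta_E_taylor_coeff z q j * of_real u ^ j))"
proof -
  obtain M where M: "summable M"
    "\<forall>\<^sub>F j in sequentially. \<forall>z'\<in>cball z 1. norm (zeta_E_taylor_coeff z' q j * of_real u ^ j) \<le> M j"
    using zeta_E_taylor_series_bound[OF assms] by blast
  from M(2) have "\<forall>\<^sub>F j in sequentially. norm (norm (zeta_E_taylor_coeff z q j * of_real u ^ j)) \<le> M j"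
    by eventually_elim simp
  thus ?thesis by (rule summable_comparison_test_ev[OF _ M(1)])
qed

lemma holomorphic_zeta_E_taylor_series:
  assumes "q > 0" "\<bar>u\<bar> < q"
  shows "(\<lambda>z. \<Sum>j. zeta_E_taylor_coeff z q j * of_real u ^ j) holomorphic_on UNIV"
proof (rule holomorphic_uniform_sequence[OF open_UNIV])
  show "(\<lambda>z. \<Sum>j<n. zeta_E_taylor_coeff z q j * of_real u ^ j) holomorphic_on UNIV" for n
    unfolding zeta_E_taylor_coeff_def by (intro holomorphic_intros holomorphic_zeta_E assms) auto
  fix x :: complex
  obtain M where "summable M"
    "\<forall>\<^sub>F j in sequentially. \<forall>z\<in>cball x 1. norm (zeta_E_taylor_coeff z q j * of_real u ^ j) \<le> M j"
    using zeta_E_taylor_series_bound[OF assms] by blast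
  hence "uniform_limit (cball x 1) (\<lambda>n z. \<Sum>j<n. zeta_E_taylor_coeff z q j * of_real u ^ j)
           (\<lambda>z. \<Sum>j. zeta_E_taylor_coeff z q j * of_real u ^ j) sequentially"
    by (intro Weierstrass_m_test_ev) auto
  thus "\<exists>d>0. cball x d \<subseteq> UNIV \<and> uniform_limit (cball x d)
          (\<lambda>n z. \<Sum>j<n. zeta_E_taylor_coeff z q j * of_real u ^ j)
          (\<lambda>z. \<Sum>j. zeta_E_taylor_coeff z q j * of_real u ^ j) sequentially"
    by (intro exI[of _ 1]) auto
qed

lemma sums_double_series_swap:
  fixes a :: "nat \<Rightarrow> nat \<Rightarrow> complex"
  assumes A: "\<And>n. (\<lambda>j. a n j) sums A n" and B: "\<And>j. (\<lambda>n. a n j) sums B j"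
    and bound: "\<And>n j. norm (a n j) \<le> p n * r j" and p: "summable p" and r: "summable r"
  shows "B sums (\<Sum>n. A n)"
proof -
  have row: "summable (\<lambda>j. norm (a n j))" for n
    by (rule summable_comparison_test[OF _ summable_mult[OF r]]) (use bound in auto)
  have col: "summable (\<lambda>n. norm (a n j))" for j
    by (rule summable_comparison_test[OF _ summable_mult2[OF p]]) (use bound in auto)
  have "(\<Sum>j. norm (a n j)) \<le> p n * (\<Sum>j. r j)" for n
    using suminf_le[OF bound row summable_mult[OF r]] r by (simp add: suminf_mult)
  hence total: "summable (\<lambda>n. \<Sum>j. norm (a n j))"
    by (intro summable_comparison_test[OF _ summable_mult2[OF p, of "\<Sum>j. r j"]])
       (use row in \<open>auto simp: abs_of_nonneg suminf_nonneg\<close>)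
  have "(\<lambda>(n,j). norm (a n j)) summable_on Sigma UNIV (\<lambda>_. UNIV)"
  proof (rule summable_on_SigmaI)
    show "((\<lambda>j. case (n, j) of (n, j) \<Rightarrow> norm (a n j)) has_sum (\<Sum>j. norm (a n j))) UNIV" for n
      using sums_nonneg_imp_has_sum[OF summable_sums[OF row[of n]]] by simp
    show "(\<lambda>n. \<Sum>j. norm (a n j)) summable_on UNIV"
      by (subst summable_on_UNIV_nonneg_real_iff) (auto intro!: suminf_nonneg row total)
  qed auto
  hence "(\<lambda>p. norm (case p of (n,j) \<Rightarrow> a n j)) summable_on UNIV \<times> UNIV"
    by (simp add: case_prod_unfold)
  hence "(\<lambda>(n,j). a n j) summable_on UNIV \<times> UNIV"
    by (rule abs_summable_summable)
  then obtain S where S: "((\<lambda>(n,j). a n j) has_sum S) (UNIV \<times> UNIV)"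
    by (auto simp: summable_on_def)
  have "(A has_sum S) UNIV"
    by (rule has_sum_Sigma'[OF S]) (use norm_summable_imp_has_sum[OF row A] in simp)
  hence "A sums S" by (rule has_sum_imp_sums)
  hence "S = (\<Sum>n. A n)" by (simp add: sums_iff)
  moreover have "((\<lambda>(j,n). a n j) has_sum S) (UNIV \<times> UNIV)"
    using S by (subst (asm) has_sum_swap) (simp add: case_prod_unfold)
  hence "(B has_sum S) UNIV"
    by (rule has_sum_Sigma') (use norm_summable_imp_has_sum[OF col B] in simp)
  ultimately show ?thesis by (simp add: has_sum_imp_sums)
qed

lemma sums_binomial_shifted_powr:
  fixes y u :: real and z :: complex
  assumes "\<bar>u\<bar> < y"
  shows "(\<lambda>j. pochhammer z j / fact j * of_real y powr (-z - of_nat j) * of_real u ^ j)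
           sums of_real (y - u) powr (-z)"
proof -
  have "\<bar>-u\<bar> < \<bar>y\<bar>" using assms by simp
  note gen_binomial_complex''[OF this, of "-z"]
  moreover have "((-z) gchoose j) * of_real y powr (-z - of_nat j) * of_real (-u) ^ j
      = pochhammer z j / fact j * of_real y powr (-z - of_nat j) * of_real u ^ j" for j
    using arg_cong[OF gchoose_uminus_mult_power[of z j "of_real (-u)"],
                   of "\<lambda>x. x * of_real y powr (-z - of_nat j)"]
    by (simp add: mult_ac)
  ultimately show ?thesis by simp
qed

lemma norm_binomial_shifted_powr_le:
  assumes "q > 0" "y \<ge> q"
  shows "norm (pochhammer z j / fact j * of_real y powr (-z - of_nat j) * of_real u ^ j)
           \<le> y powr (-Re z) * (pochhammer (norm z) j / fact j * (\<bar>u\<bar> / q) ^ j)"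
proof -
  have "norm (pochhammer z j / fact j * of_real y powr (-z - of_nat j) * of_real u ^ j)
          = y powr (-Re z) * (norm (pochhammer z j) / fact j * (\<bar>u\<bar> / y) ^ j)"
    using assms by (simp add: norm_mult norm_divide norm_power norm_powr_real_powr powr_diff
                              powr_realpow power_divide)
  also have "\<dots> \<le> y powr (-Re z) * (pochhammer (norm z) j / fact j * (\<bar>u\<bar> / q) ^ j)"
  proof (intro mult_left_mono mult_mono divide_right_mono power_mono divide_left_mono norm_pochhammer_le)
    show "0 \<le> pochhammer (norm z) j / fact j"
      by (intro divide_nonneg_nonneg pochhammer_nonneg_real) auto
  qed (use assms in auto)
  finally show ?thesis .
qed

lemma zeta_E_taylor_Re_gt_1:
  assumes q: "q > 0" and u: "\<bar>u\<bar> < q" and z: "Re z > 1"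
  shows "(\<lambda>j. zeta_E_taylor_coeff z q j * of_real u ^ j) sums zeta_E z (q - u)"
proof -
  define a where "a = (\<lambda>n j. (-1)^n * (pochhammer z j / fact j
                     * complex_of_real (real n + q) powr (-z - of_nat j) * complex_of_real u ^ j))"
  have rows: "(\<lambda>j. a n j) sums ((-1)^n * complex_of_real (real n + (q - u)) powr (-z))" for n
  proof -
    have "(\<lambda>j. pochhammer z j / fact j * complex_of_real (real n + q) powr (-z - of_nat j)
              * complex_of_real u ^ j) sums complex_of_real (real n + q - u) powr (-z)"
      by (rule sums_binomial_shifted_powr) (use q u in auto)
    thus ?thesis unfolding a_def by (intro sums_mult) (simp add: algebra_simps)
  qed
  have cols: "(\<lambda>n. a n j) sums (zeta_E_taylor_coeff z q j * of_real u ^ j)" for j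
  proof -
    have "(\<lambda>n. (-1)^n * complex_of_real (real n + q) powr (-(z + of_nat j))) sums zeta_E (z + of_nat j) q"
      by (rule zeta_E_sums) (use q z in auto)
    from sums_mult[OF this, of "pochhammer z j / fact j * complex_of_real u ^ j"] show ?thesis
      by (simp add: a_def zeta_E_taylor_coeff_def diff_minus_eq_add mult_ac)
  qed
  have bound: "norm (a n j)
      \<le> (real n + q) powr (-Re z) * (pochhammer (norm z) j / fact j * (\<bar>u\<bar> / q) ^ j)" for n j
    unfolding a_def using norm_binomial_shifted_powr_le[of q "real n + q" z j u] q
    by (subst norm_mult) (simp add: norm_power)
  have "summable (\<lambda>n. (real n + q) powr (-Re z))"
    by (rule summable_shifted_powr) (use q z in auto)
  moreover have "summable (\<lambda>j. pochhammer (norm z) j / fact j * (\<bar>u\<bar> / q) ^ j)"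
    by (rule sums_summable[OF sums_pochhammer_power_real]) (use q u in auto)
  ultimately have "(\<lambda>j. zeta_E_taylor_coeff z q j * of_real u ^ j)
      sums (\<Sum>n. (-1)^n * complex_of_real (real n + (q - u)) powr (-z))"
    by (rule sums_double_series_swap[OF rows cols bound])
  moreover have "(\<lambda>n. (-1)^n * complex_of_real (real n + (q - u)) powr (-z)) sums zeta_E z (q - u)"
    by (rule zeta_E_sums) (use q u z in auto)
  ultimately show ?thesis by (simp add: sums_iff)
qed

lemma zeta_E_taylor:
  assumes q: "q > 0" and u: "\<bar>u\<bar> < q"
  shows "(\<lambda>j. zeta_E_taylor_coeff z q j * of_real u ^ j) sums zeta_E z (q - u)"
proof -
  define T where "T = (\<lambda>z. \<Sum>j. zeta_E_taylor_coeff z q j * of_real u ^ j)"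
  have "T z - zeta_E z (q - u) = 0"
  proof (rule analytic_continuation[of "\<lambda>z. T z - zeta_E z (q - u)" UNIV "{z. Re z > 1}" 2])
    show "(\<lambda>z. T z - zeta_E z (q - u)) holomorphic_on UNIV"
      unfolding T_def
      by (intro holomorphic_intros holomorphic_zeta_E_taylor_series[OF q u] holomorphic_zeta_E)
         (use q u in auto)
    show "2 islimpt {z. Re z > 1}"
      by (rule open_imp_islimpt) (auto intro: open_halfspace_Re_gt)
    show "T z - zeta_E z (q - u) = 0" if "z \<in> {z. Re z > 1}" for z
      using zeta_E_taylor_Re_gt_1[OF q u, of z] that by (simp add: T_def sums_iff)
  qed auto
  moreover have "summable (\<lambda>j. zeta_E_taylor_coeff z q j * of_real u ^ j)"
    by (rule summable_norm_cancel[OF summable_norm_zeta_E_taylor[OF q u]])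
  ultimately show ?thesis by (simp add: T_def sums_iff)
qed

section \<open>The Beta integral for complex parameters\<close>

lemma norm_integral_diff_inner_interval_le:
  fixes f :: "real \<Rightarrow> 'a::banach"
  assumes f: "f integrable_on {0..1}" and g: "g integrable_on {0..1}"
    and bound: "\<And>t. t \<in> {0..1} \<Longrightarrow> norm (f t) \<le> g t" and e: "0 \<le> e" "e \<le> 1/2"
  shows "norm (integral {e..1-e} f - integral {0..1} f) \<le> integral {0..e} g + integral {1-e..1} g"
proof -
  have "integral {0..e} f + integral {e..1} f = integral {0..1} f"
    by (rule Henstock_Kurzweil_Integration.integral_combine) (use e f in auto)
  moreover have "integral {e..1-e} f + integral {1-e..1} f = integral {e..1} f"
    by (rule Henstock_Kurzweil_Integration.integral_combine)
       (use e in \<open>auto intro: integrable_subinterval_real[OF f]\<close>)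
  ultimately have "integral {e..1-e} f - integral {0..1} f = - (integral {0..e} f + integral {1-e..1} f)"
    by (simp add: algebra_simps)
  hence "norm (integral {e..1-e} f - integral {0..1} f) = norm (integral {0..e} f + integral {1-e..1} f)"
    by (simp only: norm_minus_cancel)
  also have "\<dots> \<le> norm (integral {0..e} f) + norm (integral {1-e..1} f)"
    by (rule norm_triangle_ineq)
  also have "\<dots> \<le> integral {0..e} g + integral {1-e..1} g"
    using e bound
    by (intro add_mono integral_norm_bound_integral integrable_subinterval_real[OF f]
              integrable_subinterval_real[OF g]) auto
  finally show ?thesis .
qed

lemma uniform_limit_integral_inner_intervals:
  fixes f :: "'b \<Rightarrow> real \<Rightarrow> 'a::banach"
  assumes g: "g integrable_on {0..1}" and f: "\<And>a. a \<in> A \<Longrightarrow> f a integrable_on {0..1}"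
    and bound: "\<And>a t. a \<in> A \<Longrightarrow> t \<in> {0..1} \<Longrightarrow> norm (f a t) \<le> g t"
    and e: "e \<longlonglongrightarrow> 0" "\<And>n. 0 \<le> e n \<and> e n \<le> 1/2"
  shows "uniform_limit A (\<lambda>n a. integral {e n..1 - e n} (f a)) (\<lambda>a. integral {0..1} (f a)) sequentially"
proof -
  define tail where "tail = (\<lambda>x. integral {0..x} g + integral {1 - x..1} g)"
  have e_01: "e n \<in> {0..1}" "1 - e n \<in> {0..1}" for n
    using e(2)[of n] by auto
  have lim_left: "(\<lambda>n. integral {0..e n} g) \<longlonglongrightarrow> integral {0..0} g"
    using indefinite_integral_continuous_1[OF g] e_01
    by (intro continuous_within_tendsto_compose[OF _ always_eventually e(1)])
       (auto simp: continuous_on_eq_continuous_within)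
  have one_minus_e: "(\<lambda>n. 1 - e n) \<longlonglongrightarrow> 1"
    using tendsto_diff[OF tendsto_const e(1), of 1] by simp
  have lim_right: "(\<lambda>n. integral {1 - e n..1} g) \<longlonglongrightarrow> integral {1..1} g"
    using indefinite_integral_continuous_1'[OF g] e_01
    by (intro continuous_within_tendsto_compose[OF _ always_eventually one_minus_e])
       (auto simp: continuous_on_eq_continuous_within)
  have tail_e: "(\<lambda>n. tail (e n)) \<longlonglongrightarrow> 0"
    unfolding tail_def using tendsto_add[OF lim_left lim_right] by simp
  show ?thesis
  proof (rule uniform_limitI)
    fix \<epsilon> :: real assume "\<epsilon> > 0"
    with tail_e have "\<forall>\<^sub>F n in sequentially. tail (e n) < \<epsilon>"
      by (auto dest: order_tendstoD(2))
    thus "\<forall>\<^sub>F n in sequentially. \<forall>a\<in>A. dist (integral {e n..1 - e n} (f a)) (integral {0..1} (f a)) < \<epsilon>"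
    proof eventually_elim
      case (elim n)
      show ?case
      proof
        fix a assume "a \<in> A"
        have "norm (integral {e n..1 - e n} (f a) - integral {0..1} (f a)) \<le> tail (e n)"
          unfolding tail_def using e(2)[of n] \<open>a \<in> A\<close>
          by (intro norm_integral_diff_inner_interval_le f g bound) auto
        with elim show "dist (integral {e n..1 - e n} (f a)) (integral {0..1} (f a)) < \<epsilon>"
          by (simp add: dist_norm)
      qed
    qed
  qed
qed

text \<open>Leibniz's rule on subintervals \<open>[e, 1 - e]\<close> exhausting \<open>(0, 1)\<close>; the local dominating
  function makes the convergence of these integrals locally uniform.\<close>
lemma holomorphic_on_integral_01:
  fixes f f' :: "complex \<Rightarrow> real \<Rightarrow> complex"
  assumes S: "open S" "convex S"
    and der: "\<And>a t. a \<in> S \<Longrightarrow> t \<in> {0<..<1} \<Longrightarrow> ((\<lambda>a. f a t) has_field_derivative f' a t) (at a)"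
    and cont: "continuous_on (S \<times> {0<..<1}) (\<lambda>(a,t). f' a t)"
    and int: "\<And>a. a \<in> S \<Longrightarrow> f a integrable_on {0..1}"
    and dom: "\<And>a0. a0 \<in> S \<Longrightarrow> \<exists>r>0. cball a0 r \<subseteq> S \<and>
               (\<exists>g. g integrable_on {0..1} \<and> (\<forall>a\<in>cball a0 r. \<forall>t\<in>{0..1}. norm (f a t) \<le> g t))"
  shows "(\<lambda>a. integral {0..1} (f a)) holomorphic_on S"
proof (rule holomorphic_uniform_sequence[OF S(1)])
  define e where "e = (\<lambda>n. inverse (real (Suc n)) / 3)"
  have e: "0 < e n" "e n < 1/2" for n
    by (auto simp: e_def field_simps)
  have e_0: "e \<longlonglongrightarrow> 0"
    unfolding e_def by (rule tendsto_divide_zero[OF LIMSEQ_inverse_real_of_nat])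
  show "(\<lambda>a. integral {e n..1 - e n} (f a)) holomorphic_on S" for n
  proof -
    have sub: "{e n..1 - e n} \<subseteq> {0<..<1}" using e[of n] by auto
    have "(\<lambda>a. integral (cbox (e n) (1 - e n)) (f a)) holomorphic_on S"
    proof (rule leibniz_rule_holomorphic[where fx = f'])
      show "((\<lambda>a. f a t) has_field_derivative f' a t) (at a within S)"
        if "a \<in> S" "t \<in> cbox (e n) (1 - e n)" for a t
        by (rule has_field_derivative_at_within, rule der) (use that sub in auto)
      show "f a integrable_on cbox (e n) (1 - e n)" if "a \<in> S" for a
        using integrable_subinterval_real[OF int[OF that], of "e n" "1 - e n"] e[of n] by auto
      show "continuous_on (S \<times> cbox (e n) (1 - e n)) (\<lambda>(a, t). f' a t)"
        by (rule continuous_on_subset[OF cont]) (use sub in auto)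
    qed (rule S(2))
    thus ?thesis by simp
  qed
  fix a0 assume "a0 \<in> S"
  then obtain r g where r: "r > 0" "cball a0 r \<subseteq> S" and g: "g integrable_on {0..1}"
    and bound: "\<And>a t. a \<in> cball a0 r \<Longrightarrow> t \<in> {0..1} \<Longrightarrow> norm (f a t) \<le> g t"
    using dom by blast
  have "uniform_limit (cball a0 r) (\<lambda>n a. integral {e n..1 - e n} (f a)) (\<lambda>a. integral {0..1} (f a))
          sequentially"
  proof (rule uniform_limit_integral_inner_intervals[OF g _ bound e_0])
    show "f a integrable_on {0..1}" if "a \<in> cball a0 r" for a
      using int r that by auto
    show "0 \<le> e n \<and> e n \<le> 1/2" for n
      using e[of n] by auto
  qed
  thus "\<exists>d>0. cball a0 d \<subseteq> S \<and> uniform_limit (cball a0 d) (\<lambda>n a. integral {e n..1 - e n} (f a))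
          (\<lambda>a. integral {0..1} (f a)) sequentially"
    using r by blast
qed

definition beta_kernel :: "complex \<Rightarrow> complex \<Rightarrow> real \<Rightarrow> complex" where
  "beta_kernel a b t = complex_of_real t powr (a - 1) * complex_of_real (1 - t) powr (b - 1)"

lemma norm_beta_kernel:
  "t \<in> {0..1} \<Longrightarrow> norm (beta_kernel a b t) = t powr (Re a - 1) * (1 - t) powr (Re b - 1)"
  by (simp add: beta_kernel_def norm_mult norm_powr_real_powr)

lemma beta_kernel_integrable:
  assumes "Re a > 0" "Re b > 0"
  shows "beta_kernel a b integrable_on {0..1}"
proof -
  have "(\<lambda>t. t powr (Re a - 1) * (1 - t) powr (Re b - 1)) integrable_on {0<..<1}"
    using integrable_Beta'[OF assms] by (simp add: integrable_on_def has_integral_Icc_iff_Ioo)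
  moreover have "continuous_on {0<..<1} (beta_kernel a b)"
    unfolding beta_kernel_def by (intro continuous_intros) auto
  ultimately have "beta_kernel a b absolutely_integrable_on {0<..<1}"
    by (intro measurable_bounded_by_integrable_imp_absolutely_integrable
          continuous_imp_measurable_on_sets_lebesgue) (auto simp: norm_beta_kernel)
  hence "beta_kernel a b integrable_on {0<..<1}" by (rule set_lebesgue_integral_eq_integral(1))
  thus ?thesis by (simp add: integrable_on_def has_integral_Icc_iff_Ioo)
qed

lemma integral_reflect_01:
  fixes f :: "real \<Rightarrow> 'a::banach"
  shows "integral {0..1} (\<lambda>t. f (1 - t)) = integral {0..1} f"
proof -
  have "integral {0..1} (\<lambda>t. f (1 - t)) = integral {- 0..- (- 1)} (\<lambda>x. f (1 + - x))"
    by simp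
  also have "\<dots> = integral {-1..0} (\<lambda>x. f (1 + x))"
    by (rule Henstock_Kurzweil_Integration.integral_reflect_real)
  also have "\<dots> = integral {-1..0} (f \<circ> (+) 1)" by (simp add: o_def)
  also have "\<dots> = integral {-1+1..0+1} f" by (rule integral_shift_Icc_real)
  finally show ?thesis by simp
qed

lemma integral_beta_kernel_commute:
  "integral {0..1} (beta_kernel a b) = integral {0..1} (beta_kernel b a)"
  using integral_reflect_01[of "beta_kernel b a"] unfolding beta_kernel_def by (simp add: mult.commute)

lemma holomorphic_integral_beta_kernel_left:
  assumes b: "Re b > 0"
  shows "(\<lambda>a. integral {0..1} (beta_kernel a b)) holomorphic_on {a. Re a > 0}"
proof (rule holomorphic_on_integral_01[where f' = "\<lambda>a t. Ln (complex_of_real t) * beta_kernel a b t"])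
  show "((\<lambda>a. beta_kernel a b t) has_field_derivative Ln (complex_of_real t) * beta_kernel a b t) (at a)"
    if "t \<in> {0<..<1}" for a t
    using that unfolding beta_kernel_def
    by (auto intro!: derivative_eq_intros simp: powr_def mult_ac)
  show "continuous_on ({a. Re a > 0} \<times> {0<..<1}) (\<lambda>(a, t). Ln (complex_of_real t) * beta_kernel a b t)"
    unfolding beta_kernel_def case_prod_unfold
    by (intro continuous_intros) (auto simp: complex_nonpos_Reals_iff)
  show "beta_kernel a b integrable_on {0..1}" if "a \<in> {a. Re a > 0}" for a
    using beta_kernel_integrable[of a b] that b by auto
  fix a0 assume a0: "a0 \<in> {a. Re a > 0}"
  define r where "r = Re a0 / 2"
  have Re_a: "Re a \<ge> r" if "a \<in> cball a0 r" for a
    using mem_cball_Re_norm_bounds(1)[OF that] by (simp add: r_def)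
  have "(\<lambda>t. t powr (r - 1) * (1 - t) powr (Re b - 1)) integrable_on {0..1}"
    using a0 b by (intro integrable_Beta') (auto simp: r_def)
  moreover have "norm (beta_kernel a b t) \<le> t powr (r - 1) * (1 - t) powr (Re b - 1)"
    if "a \<in> cball a0 r" "t \<in> {0..1}" for a t
    unfolding norm_beta_kernel[OF that(2)]
    by (intro mult_right_mono powr_mono') (use that Re_a in auto)
  moreover have "cball a0 r \<subseteq> {a. Re a > 0}" "r > 0"
    using Re_a a0 by (force simp: r_def)+
  ultimately show "\<exists>r>0. cball a0 r \<subseteq> {a. Re a > 0} \<and> (\<exists>g. g integrable_on {0..1} \<and>
      (\<forall>a\<in>cball a0 r. \<forall>t\<in>{0..1}. norm (beta_kernel a b t) \<le> g t))"
    by blast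
qed (auto intro: open_halfspace_Re_gt convex_halfspace_Re_gt)

lemma has_integral_beta_kernel_of_real:
  assumes "a > 0" "b > 0"
  shows "(beta_kernel (of_real a) (of_real b) has_integral Beta (complex_of_real a) (complex_of_real b)) {0..1}"
proof -
  have "((\<lambda>t. complex_of_real (t powr (a - 1) * (1 - t) powr (b - 1))) has_integral
          complex_of_real (Beta a b)) {0..1}"
    by (rule has_integral_of_real[OF has_integral_Beta_real[OF assms]])
  hence "(beta_kernel (of_real a) (of_real b) has_integral complex_of_real (Beta a b)) {0..1}"
  proof (rule has_integral_eq[rotated])
    fix t :: real assume "t \<in> {0..1}"
    thus "complex_of_real (t powr (a - 1) * (1 - t) powr (b - 1)) = beta_kernel (of_real a) (of_real b) t"
      using powr_of_real[of t "a - 1"] powr_of_real[of "1 - t" "b - 1"] by (simp add: beta_kernel_def)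
  qed
  thus ?thesis by (simp add: Beta_complex_of_real)
qed

lemma eq_on_right_half_plane_if_eq_on_pos_reals:
  assumes "f holomorphic_on {z. Re z > 0}" "g holomorphic_on {z. Re z > 0}"
    and "\<And>x. x > 0 \<Longrightarrow> f (of_real x) = g (of_real x)" and "Re z > 0"
  shows "f z = g z"
proof -
  have "(\<lambda>z. f z - g z) z = 0"
  proof (rule analytic_continuation[of "\<lambda>z. f z - g z" "{z. Re z > 0}" "complex_of_real ` {0<..}" 1])
    show "(1::complex) islimpt complex_of_real ` {0<..}"
      unfolding islimpt_approachable
    proof (intro allI impI)
      fix e :: real assume "e > 0"
      thus "\<exists>x'\<in>complex_of_real ` {0<..}. x' \<noteq> 1 \<and> dist x' 1 < e"
        by (intro bexI[of _ "of_real (1 + e / 2)"] imageI) (auto simp: dist_norm)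
    qed
  qed (use assms in \<open>auto intro!: holomorphic_intros open_halfspace_Re_gt convex_connected
                             convex_halfspace_Re_gt\<close>)
  thus ?thesis by simp
qed

lemma Re_pos_not_nonpos_Ints: "Re z > 0 \<Longrightarrow> z \<notin> \<int>\<^sub>\<le>\<^sub>0"
  by (auto elim!: nonpos_Ints_cases)

lemma has_integral_beta_kernel:
  assumes a: "Re a > 0" and b: "Re b > 0"
  shows "(beta_kernel a b has_integral Beta a b) {0..1}"
proof -
  have holo_Beta: "(\<lambda>x. Beta x y) holomorphic_on {x. Re x > 0}" if "Re y > 0" for y
    using that by (intro holomorphic_intros) (auto simp: Re_pos_not_nonpos_Ints)
  have real_right: "integral {0..1} (beta_kernel a (of_real s)) = Beta a (of_real s)"
    if "s > 0" "Re a > 0" for a s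
  proof (rule eq_on_right_half_plane_if_eq_on_pos_reals[where f = "\<lambda>a. integral {0..1} (beta_kernel a _)"])
    show "integral {0..1} (beta_kernel (of_real x) (of_real s)) = Beta (of_real x) (of_real s)"
      if "x > 0" for x
      using has_integral_beta_kernel_of_real[OF that \<open>s > 0\<close>] by (rule integral_unique)
  qed (use that in \<open>auto intro: holomorphic_integral_beta_kernel_left holo_Beta\<close>)
  have "integral {0..1} (beta_kernel a b) = Beta a b"
  proof (rule eq_on_right_half_plane_if_eq_on_pos_reals[where f = "\<lambda>b. integral {0..1} (beta_kernel a b)"])
    show "(\<lambda>b. integral {0..1} (beta_kernel a b)) holomorphic_on {b. Re b > 0}"
      using holomorphic_integral_beta_kernel_left[OF a] by (simp add: integral_beta_kernel_commute)
    show "(\<lambda>b. Beta a b) holomorphic_on {b. Re b > 0}"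
      using holo_Beta[OF a] by (simp add: Beta_commute)
  qed (use real_right a b in auto)
  thus ?thesis using beta_kernel_integrable[OF a b] by (simp add: has_integral_integral)
qed

section \<open>Euler's integral for \<open>hyp2F1\<close>\<close>

lemma Beta_add_nat:
  assumes "b \<notin> \<int>\<^sub>\<le>\<^sub>0" "b + d \<notin> \<int>\<^sub>\<le>\<^sub>0"
  shows "Beta (b + of_nat n) d = Beta b d * pochhammer b n / pochhammer (b + d) n"
proof -
  have "pochhammer (b + d) n \<noteq> 0"
    using assms(2) pochhammer_eq_0_imp_nonpos_Int by blast
  moreover have "Gamma (b + d) \<noteq> 0" "Gamma b \<noteq> 0"
    using assms by (simp_all add: Gamma_nonzero)
  ultimately show ?thesis
    using pochhammer_Gamma[OF assms(1), of n] pochhammer_Gamma[OF assms(2), of n]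
    by (simp add: Beta_def field_simps add_ac)
qed

lemma Beta_nonzero:
  assumes "a \<notin> \<int>\<^sub>\<le>\<^sub>0" "b \<notin> \<int>\<^sub>\<le>\<^sub>0" "a + b \<notin> \<int>\<^sub>\<le>\<^sub>0"
  shows "Beta a b \<noteq> 0"
  using assms by (simp add: Beta_altdef Gamma_nonzero rGamma_eq_zero_iff)

lemma beta_kernel_mult_power:
  assumes "t \<in> {0..1}"
  shows "beta_kernel b d t * of_real t ^ n = beta_kernel (b + of_nat n) d t"
proof (cases "t = 0")
  case True
  thus ?thesis by (cases n) (auto simp: beta_kernel_def)
next
  case False
  hence "complex_of_real t powr (b + of_nat n - 1) = complex_of_real t powr (b - 1) * of_real t ^ n"
    by (simp add: powr_add powr_nat' diff_add_eq [symmetric] add_diff_eq [symmetric] add.commute)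
  thus ?thesis by (simp add: beta_kernel_def mult_ac)
qed

lemma norm_one_minus_powr_le:
  fixes u a :: complex
  assumes "norm u \<le> r" "r < 1"
  shows "norm ((1 - u) powr (-a)) \<le> (1 - r) powr (- norm a)"
proof -
  have "norm u < 1" "0 \<le> r" using assms norm_ge_zero[of u] by linarith+
  note terms = norm_pochhammer_power_le[OF assms(1), of a]
  have majorant: "(\<lambda>j. pochhammer (norm a) j / fact j * r ^ j) sums (1 - r) powr (- norm a)"
    using assms \<open>0 \<le> r\<close> by (intro sums_pochhammer_power_real) auto
  have summable: "summable (\<lambda>j. norm (pochhammer a j / fact j * u ^ j))"
    by (rule summable_comparison_test[OF _ sums_summable[OF majorant]]) (use terms in auto)
  have "(1 - u) powr (-a) = (\<Sum>j. pochhammer a j / fact j * u ^ j)"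
    using sums_pochhammer_power_complex[OF \<open>norm u < 1\<close>] by (simp add: sums_iff)
  also have "norm \<dots> \<le> (\<Sum>j. norm (pochhammer a j / fact j * u ^ j))"
    by (rule summable_norm[OF summable])
  also have "\<dots> \<le> (\<Sum>j. pochhammer (norm a) j / fact j * r ^ j)"
    by (rule suminf_le[OF terms summable sums_summable[OF majorant]])
  also have "\<dots> = (1 - r) powr (- norm a)"
    using majorant by (simp add: sums_iff)
  finally show ?thesis .
qed

text \<open>Dominated convergence, with majorant \<open>g t * (\<Sum>n. norm (c n))\<close>.\<close>
lemma integral_weighted_power_series:
  fixes w f :: "real \<Rightarrow> complex" and c :: "nat \<Rightarrow> complex"
  assumes c: "summable (\<lambda>n. norm (c n))"
    and f: "\<And>t. t \<in> {0..1} \<Longrightarrow> (\<lambda>n. c n * of_real t ^ n) sums f t"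
    and w: "\<And>n. ((\<lambda>t. w t * of_real t ^ n) has_integral I n) {0..1}"
    and g: "g integrable_on {0..1}" "\<And>t. t \<in> {0..1} \<Longrightarrow> norm (w t) \<le> g t"
  shows "(\<lambda>t. w t * f t) integrable_on {0..1}"
    and "(\<lambda>n. c n * I n) sums integral {0..1} (\<lambda>t. w t * f t)"
proof -
  define P where "P = (\<lambda>K t. w t * (\<Sum>n<K. c n * of_real t ^ n))"
  have P_integral: "(P K has_integral (\<Sum>n<K. c n * I n)) {0..1}" for K
  proof -
    have "P K = (\<lambda>t. \<Sum>n<K. c n * (w t * of_real t ^ n))"
      by (auto simp: P_def sum_distrib_left mult_ac)
    thus ?thesis by (auto intro!: has_integral_sum has_integral_mult_right w)
  qed
  have bound: "norm (P K t) \<le> g t * (\<Sum>n. norm (c n))" if t: "t \<in> {0..1}" for K t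
  proof -
    have "norm (\<Sum>n<K. c n * of_real t ^ n) \<le> (\<Sum>n<K. norm (c n))"
      using t by (intro sum_norm_le) (auto simp: norm_mult norm_power power_le_one mult_left_le)
    also have "\<dots> \<le> (\<Sum>n. norm (c n))"
      by (rule sum_le_suminf[OF c]) auto
    finally show ?thesis
      unfolding P_def norm_mult using g(2)[OF t] order_trans[OF norm_ge_zero g(2)[OF t]]
      by (intro mult_mono) auto
  qed
  have conv: "(\<lambda>K. P K t) \<longlonglongrightarrow> w t * f t" if "t \<in> {0..1}" for t
    unfolding P_def using f[OF that] by (intro tendsto_mult_left) (simp add: sums_def)
  have P_integrable: "P K integrable_on {0..1}" for K
    using P_integral by blast
  have "(\<lambda>t. g t * (\<Sum>n. norm (c n))) integrable_on {0..1}"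
    by (rule integrable_on_mult_left[OF g(1)])
  note limit = dominated_convergence[OF P_integrable this bound conv]
  show "(\<lambda>t. w t * f t) integrable_on {0..1}"
    by (rule limit(1))
  have "integral {0..1} (P K) = (\<Sum>n<K. c n * I n)" for K
    using P_integral by (rule integral_unique)
  with limit(2) show "(\<lambda>n. c n * I n) sums integral {0..1} (\<lambda>t. w t * f t)"
    by (simp add: sums_def)
qed

lemma has_integral_beta_kernel_mult_power:
  assumes "Re b > 0" "Re d > 0"
  shows "((\<lambda>t. beta_kernel b d t * of_real t ^ n) has_integral Beta (b + of_nat n) d) {0..1}"
proof -
  have "Re (b + of_nat n) > 0" using assms by simp
  from has_integral_beta_kernel[OF this assms(2)] show ?thesis
    by (rule has_integral_eq[rotated]) (simp add: beta_kernel_mult_power)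
qed

lemma has_integral_hyp2F1:
  assumes b: "Re b > 0" and d: "Re d > 0" and v: "norm v < 1"
  shows "((\<lambda>t. beta_kernel b d t * (1 - complex_of_real t * v) powr (-\<alpha>)) has_integral
            Beta b d * hyp2F1 \<alpha> b (b + d) v) {0..1}"
proof -
  define c where "c = (\<lambda>n. pochhammer \<alpha> n / fact n * v ^ n)"
  define G where "G = (\<lambda>t. beta_kernel b d t * (1 - complex_of_real t * v) powr (-\<alpha>))"
  define h where "h = (\<lambda>n. pochhammer \<alpha> n * pochhammer b n / (pochhammer (b + d) n * fact n) * v ^ n)"
  have "summable (\<lambda>n. pochhammer (norm \<alpha>) n / fact n * norm v ^ n)"
    using v by (intro sums_summable[OF sums_pochhammer_power_real]) auto
  hence c_summable: "summable (\<lambda>n. norm (c n))"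
    by (rule summable_comparison_test[rotated])
       (use norm_pochhammer_power_le[of v "norm v" \<alpha>] in \<open>auto simp: c_def\<close>)
  have c_sums: "(\<lambda>n. c n * of_real t ^ n) sums (1 - complex_of_real t * v) powr (-\<alpha>)"
    if "t \<in> {0..1}" for t
  proof -
    have "norm (complex_of_real t * v) < 1"
      using that v by (auto simp: norm_mult intro: le_less_trans[OF mult_left_le_one_le])
    from sums_pochhammer_power_complex[OF this, of \<alpha>] show ?thesis
      by (simp add: c_def power_mult_distrib mult_ac)
  qed
  have "(\<lambda>t. t powr (Re b - 1) * (1 - t) powr (Re d - 1)) integrable_on {0..1}"
    using b d by (intro integrable_Beta') auto
  note series = integral_weighted_power_series[OF c_summable c_sums
      has_integral_beta_kernel_mult_power[OF b d] this norm_beta_kernel[THEN eq_refl]]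
  have Beta_nz: "Beta b d \<noteq> 0"
    using b d by (simp add: Beta_nonzero Re_pos_not_nonpos_Ints)
  have "c n * Beta (b + of_nat n) d = Beta b d * h n" for n
    using b d by (simp add: Beta_add_nat Re_pos_not_nonpos_Ints c_def h_def mult_ac)
  hence "(\<lambda>n. Beta b d * h n) sums (Beta b d * (integral {0..1} G / Beta b d))"
    using series(2) Beta_nz by (simp add: G_def)
  hence "h sums (integral {0..1} G / Beta b d)"
    using Beta_nz sums_mult_iff by blast
  hence "Beta b d * hyp2F1 \<alpha> b (b + d) v = integral {0..1} G"
    using Beta_nz by (simp add: hyp2F1_def h_def sums_iff)
  with series(1) show ?thesis
    by (simp add: G_def has_integral_integral)
qed

section \<open>Integrating the Taylor expansion against Euler's kernel\<close>

definition hyp2F1_euler_kernel :: "complex \<Rightarrow> complex \<Rightarrow> complex \<Rightarrow> complex \<Rightarrow> real \<Rightarrow> complex" where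
  "hyp2F1_euler_kernel \<alpha> \<beta> \<delta> v t =
     complex_of_real t powr \<beta> * complex_of_real (1 - t) powr \<delta> * (1 - complex_of_real t * v) powr (- \<alpha>)"

lemma has_integral_hyp2F1_euler_kernel_moment:
  assumes "Re \<beta> > -1" "Re \<delta> > -1" "norm v < 1"
  shows "((\<lambda>t. hyp2F1_euler_kernel \<alpha> \<beta> \<delta> v t * complex_of_real t ^ j)
          has_integral Beta (\<beta> + of_nat j + 1) (\<delta> + 1)
                       * hyp2F1 \<alpha> (\<beta> + of_nat j + 1) (\<delta> + \<beta> + of_nat j + 2) v) {0..1}"
proof -
  have kernel: "beta_kernel (\<beta> + of_nat j + 1) (\<delta> + 1) t
      = complex_of_real t powr \<beta> * complex_of_real (1 - t) powr \<delta> * complex_of_real t ^ j"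
    if "t \<in> {0..1}" for t
  proof -
    have "beta_kernel (\<beta> + of_nat j + 1) (\<delta> + 1) t = beta_kernel (\<beta> + 1) (\<delta> + 1) t * of_real t ^ j"
      using beta_kernel_mult_power[OF that, of "\<beta> + 1" "\<delta> + 1" j] by (simp add: add_ac)
    thus ?thesis by (simp add: beta_kernel_def)
  qed
  have params: "(\<beta> + of_nat j + 1) + (\<delta> + 1) = \<delta> + \<beta> + of_nat j + 2"
    by simp
  have "((\<lambda>t. beta_kernel (\<beta> + of_nat j + 1) (\<delta> + 1) t * (1 - complex_of_real t * v) powr (- \<alpha>))
          has_integral Beta (\<beta> + of_nat j + 1) (\<delta> + 1)
                       * hyp2F1 \<alpha> (\<beta> + of_nat j + 1) (\<delta> + \<beta> + of_nat j + 2) v) {0..1}"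
    using has_integral_hyp2F1[of "\<beta> + of_nat j + 1" "\<delta> + 1" v \<alpha>] assms unfolding params by simp
  thus ?thesis
    by (rule has_integral_eq[rotated]) (simp add: kernel hyp2F1_euler_kernel_def mult_ac)
qed

lemma hyp2F1_euler_kernel_dominated:
  assumes "Re \<beta> > -1" "Re \<delta> > -1" "norm v < 1"
  obtains g where "g integrable_on {0..1}"
    "\<And>t. t \<in> {0..1} \<Longrightarrow> norm (hyp2F1_euler_kernel \<alpha> \<beta> \<delta> v t) \<le> g t"
proof
  define M where "M = (1 - norm v) powr (- norm \<alpha>)"
  show "(\<lambda>t. M * (t powr (Re (\<beta> + 1) - 1) * (1 - t) powr (Re (\<delta> + 1) - 1))) integrable_on {0..1}"
    using assms by (intro integrable_on_mult_right integrable_Beta') auto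
  fix t :: real assume t: "t \<in> {0..1}"
  have "norm (hyp2F1_euler_kernel \<alpha> \<beta> \<delta> v t)
        = t powr Re \<beta> * (1 - t) powr Re \<delta> * norm ((1 - complex_of_real t * v) powr (- \<alpha>))"
    using t by (simp add: hyp2F1_euler_kernel_def norm_mult norm_powr_real_powr)
  also have "\<dots> \<le> t powr Re \<beta> * (1 - t) powr Re \<delta> * M"
    unfolding M_def using t assms(3)
    by (intro mult_left_mono norm_one_minus_powr_le) (auto simp: norm_mult intro: mult_left_le_one_le)
  finally show "norm (hyp2F1_euler_kernel \<alpha> \<beta> \<delta> v t)
        \<le> M * (t powr (Re (\<beta> + 1) - 1) * (1 - t) powr (Re (\<delta> + 1) - 1))"
    by (simp add: mult_ac)
qed

lemma integral_hyp2F1_euler_kernel_zeta_E: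
  fixes \<alpha> \<beta> \<delta> v z :: complex and q x :: real
  assumes "Re \<beta> > -1" "Re \<delta> > -1" "norm v < 1" "q > 0" "\<bar>x\<bar> < q"
  defines "K \<equiv> hyp2F1_euler_kernel \<alpha> \<beta> \<delta> v"
  shows "(\<lambda>t. K t * zeta_E z (q - x * t)) integrable_on {0..1}"
    and "(\<lambda>j. pochhammer z j / fact j * Beta (\<beta> + of_nat j + 1) (\<delta> + 1)
              * hyp2F1 \<alpha> (\<beta> + of_nat j + 1) (\<delta> + \<beta> + of_nat j + 2) v
              * zeta_E (z + of_nat j) q * complex_of_real x ^ j)
           sums integral {0..1} (\<lambda>t. K t * zeta_E z (q - x * t))"
proof -
  define c where "c = (\<lambda>j. zeta_E_taylor_coeff z q j * complex_of_real x ^ j)"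
  have c: "summable (\<lambda>j. norm (c j))"
    unfolding c_def using summable_norm_zeta_E_taylor[OF assms(4,5)] by blast
  have taylor: "(\<lambda>j. c j * of_real t ^ j) sums zeta_E z (q - x * t)" if "t \<in> {0..1}" for t
    using zeta_E_taylor[of q "x * t" z] assms(4,5) that mult_left_le_one_le[of "\<bar>x\<bar>" t]
    by (simp add: c_def abs_mult power_mult_distrib mult_ac)
  obtain g where "g integrable_on {0..1}" "\<And>t. t \<in> {0..1} \<Longrightarrow> norm (K t) \<le> g t"
    using hyp2F1_euler_kernel_dominated[OF assms(1-3)] unfolding K_def by blast
  note series = integral_weighted_power_series[OF c taylor
      has_integral_hyp2F1_euler_kernel_moment[OF assms(1-3), of \<alpha>, folded K_def] this]
  show "(\<lambda>t. K t * zeta_E z (q - x * t)) integrable_on {0..1}"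
    by (rule series(1))
  from series(2) show "(\<lambda>j. pochhammer z j / fact j * Beta (\<beta> + of_nat j + 1) (\<delta> + 1)
              * hyp2F1 \<alpha> (\<beta> + of_nat j + 1) (\<delta> + \<beta> + of_nat j + 2) v
              * zeta_E (z + of_nat j) q * complex_of_real x ^ j)
           sums integral {0..1} (\<lambda>t. K t * zeta_E z (q - x * t))"
    by (simp add: c_def zeta_E_taylor_coeff_def mult_ac)
qed

theorem proposition5p2:
  fixes z \<alpha> \<beta> \<delta> v :: complex and q x :: real
  assumes "Re \<delta> > -1" and "Re \<beta> > -1" and "q > 0" and "\<bar>x\<bar> < q" and "norm v < 1"
  defines "F \<equiv> (\<lambda>t::real. complex_of_real t powr \<beta> * complex_of_real (1 - t) powr \<delta>
                 * (1 - complex_of_real t * v) powr (- \<alpha>)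
                 * (zeta_E z (q - x * t) - zeta_E z q))"
  shows "F integrable_on {0..1} \<and>
         ((\<lambda>j. pochhammer z (Suc j) / fact (Suc j)
              * Beta (\<beta> + of_nat (Suc j) + 1) (\<delta> + 1)
              * hyp2F1 \<alpha> (\<beta> + of_nat (Suc j) + 1) (\<delta> + \<beta> + of_nat (Suc j) + 2) v
              * zeta_E (z + of_nat (Suc j)) q * complex_of_real x ^ Suc j)
          sums integral {0..1} F)"
proof -
  define K where "K = hyp2F1_euler_kernel \<alpha> \<beta> \<delta> v"
  define T where "T j = pochhammer z j / fact j * Beta (\<beta> + of_nat j + 1) (\<delta> + 1)
                     * hyp2F1 \<alpha> (\<beta> + of_nat j + 1) (\<delta> + \<beta> + of_nat j + 2) v
                     * zeta_E (z + of_nat j) q * complex_of_real x ^ j" for j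
  have expansion: "(\<lambda>t. K t * zeta_E z (q - x * t)) integrable_on {0..1}"
    "T sums integral {0..1} (\<lambda>t. K t * zeta_E z (q - x * t))"
    unfolding K_def T_def[abs_def] using integral_hyp2F1_euler_kernel_zeta_E assms by blast+
  have "((\<lambda>t. zeta_E z q * (K t * of_real t ^ 0)) has_integral T 0) {0..1}"
    using has_integral_mult_right[OF has_integral_hyp2F1_euler_kernel_moment[OF assms(2,1,5), of \<alpha> 0]]
    by (simp add: K_def T_def mult_ac)
  hence constant_term: "((\<lambda>t. zeta_E z q * K t) has_integral T 0) {0..1}"
    by simp
  have F_eq: "F = (\<lambda>t. K t * zeta_E z (q - x * t) - zeta_E z q * K t)"
    by (auto simp: F_def K_def hyp2F1_euler_kernel_def algebra_simps)
  have "F integrable_on {0..1}"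
    unfolding F_eq using expansion(1) constant_term by (intro integrable_diff) auto
  moreover have "integral {0..1} F = integral {0..1} (\<lambda>t. K t * zeta_E z (q - x * t)) - T 0"
    unfolding F_eq integral_diff[OF expansion(1) has_integral_integrable[OF constant_term]]
    by (simp only: integral_unique[OF constant_term])
  ultimately show ?thesis
    using expansion(2) sums_Suc_iff[of T "integral {0..1} F"] unfolding T_def by simp
qed

end
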